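(* Let $L$ be a frame. Then $$\mathsf R(L)=\mathrm{Int}(\mathsf{Cl}(L))=\mathcal B(\mathsf{Ex}(L))=\mathcal B(\mathsf{SE}(L))=\mathcal B(\mathsf{Filt}(L))$$ and $$\{\mathrm{fit}(S)\mid S\in\mathcal S_c(L)\}=\mathcal B(\{\mathrm{fit}(S)\mid S\in\mathcal S_b(L)\})=\mathcal B(\mathcal S_o(L)).$$
   Context: A frame is a complete lattice $L$ with $(\bigvee A)\wedge b=\bigvee_{a\in A}(a\wedge b)$, Heyting implication $\to$. For a coframe $C$ with top $1$ and co-Heyting difference $\setminus$ ($a\setminus b\le c$ iff $a\le b\vee c$), its Booleanization is $\mathcal B(C)=\{1\setminus c\mid c\in C\}$. Filters are nonempty up-closed subsets closed under finite meets; $\mathsf{Filt}(L)$ is ordered by reverse inclusion and is a coframe with joins = intersections, top $\{1\}$, and $H\setminus G=\{a\mid\forall b\in G,\ b\vee a\in H\}$. $\mathsf{Cl}(L)=\{\{x\mid x\vee a=1\}\mid a\in L\}$; $\mathsf R(L)=\{\{1\}\setminus G\mid G\in\mathsf{Filt}(L)\}$; $\mathrm{Int}(\mathcal F)$ = intersections of subfamilies (empty $=L$). $\mathfrak o(a)=\{a\to b\mid b\in L\}$. $\mathsf{Ex}(L)$: filters closed under exact meets ($(\bigwedge M)\vee b=\bigwedge_{a\in M}(a\vee b)$ for all $b$); $\mathsf{SE}(L)$: filters closed under strongly exact meets ($\bigcap_{a\in M}\mathfrak o(a)=\mathfrak o(\bigwedge M)$); both are coframes under reverse inclusion (subcolocales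 of $\mathsf{Filt}(L)$). Sublocales: subsets closed under all meets with $a\to s\in S$; they form the coframe $\mathsf{Sl}(L)$ under inclusion. $\mathrm{fit}(S)=\bigcap\{\mathfrak o(a)\mid S\subseteq\mathfrak o(a)\}$; $\mathcal S_o(L)$ is the coframe (under inclusion) of fitted sublocales (intersections of open sublocales), with joins $\mathrm{fit}$ of $\mathsf{Sl}(L)$-joins. $\mathcal S_c(L)$: joins of closed sublocales $\mathfrak c(a)={\uparrow}a$; $\mathcal S_b(L)$: joins of sublocales $\mathfrak c(x)\cap\mathfrak o(y)$. $\{\mathrm{fit}(S)\mid S\in\mathcal S_b(L)\}$ is a coframe under inclusion (a subcolocale of $\mathcal S_o(L)$). *)

theory Defs
  imports Main
begin

definition is_lub :: "'b set \<Rightarrow> ('b \<Rightarrow> 'b \<Rightarrow> bool) \<Rightarrow> 'b set \<Rightarrow> 'b \<Rightarrow> bool" where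
  "is_lub C le X x \<longleftrightarrow> x \<in> C \<and> (\<forall>y\<in>X. le y x) \<and> (\<forall>z\<in>C. (\<forall>y\<in>X. le y z) \<longrightarrow> le x z)"

definition cjoin :: "'b set \<Rightarrow> ('b \<Rightarrow> 'b \<Rightarrow> bool) \<Rightarrow> 'b \<Rightarrow> 'b \<Rightarrow> 'b" where
  "cjoin C le a b = (THE x. is_lub C le {a, b} x)"

definition ctop :: "'b set \<Rightarrow> ('b \<Rightarrow> 'b \<Rightarrow> bool) \<Rightarrow> 'b" where
  "ctop C le = (THE x. x \<in> C \<and> (\<forall>y\<in>C. le y x))"

definition codiff :: "'b set \<Rightarrow> ('b \<Rightarrow> 'b \<Rightarrow> bool) \<Rightarrow> 'b \<Rightarrow> 'b \<Rightarrow> 'b" where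
  "codiff C le a b = (THE c. c \<in> C \<and> (\<forall>d\<in>C. le a (cjoin C le b d) \<longleftrightarrow> le c d))"

definition booleanization :: "'b set \<Rightarrow> ('b \<Rightarrow> 'b \<Rightarrow> bool) \<Rightarrow> 'b set" where
  "booleanization C le = {codiff C le (ctop C le) c | c. c \<in> C}"

definition fimp :: "'a::complete_lattice \<Rightarrow> 'a \<Rightarrow> 'a" where
  "fimp a b = Sup {c. inf c a \<le> b}"

definition is_filter :: "'a::complete_lattice set \<Rightarrow> bool" where
  "is_filter F \<longleftrightarrow> F \<noteq> {} \<and> (\<forall>a\<in>F. \<forall>b. a \<le> b \<longrightarrow> b \<in> F) \<and> (\<forall>a\<in>F. \<forall>b\<in>F. inf a b \<in> F)"

definition Filt :: "'a::complete_lattice set set" where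
  "Filt = {F. is_filter F}"

definition rev_incl :: "'b set \<Rightarrow> 'b set \<Rightarrow> bool" where
  "rev_incl F G \<longleftrightarrow> G \<subseteq> F"

text \<open>The explicit difference formula of Filt(L): H \ G.\<close>
definition filt_diff :: "'a::complete_lattice set \<Rightarrow> 'a set \<Rightarrow> 'a set" where
  "filt_diff H G = {a. \<forall>b\<in>G. sup b a \<in> H}"

definition Cl :: "'a::complete_lattice set set" where
  "Cl = {{x. sup x a = top} | a. True}"

definition R :: "'a::complete_lattice set set" where
  "R = {filt_diff {top} G | G. G \<in> Filt}"

definition Int_fam :: "'b set set \<Rightarrow> 'b set set" where
  "Int_fam \<F> = {\<Inter> \<G> | \<G>. \<G> \<subseteq> \<F>}"

definition opn :: "'a::complete_lattice \<Rightarrow> 'a set" where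
  "opn a = {fimp a b | b. True}"

definition cls :: "'a::complete_lattice \<Rightarrow> 'a set" where
  "cls a = {x. a \<le> x}"

definition exact_meet :: "'a::complete_lattice set \<Rightarrow> bool" where
  "exact_meet M \<longleftrightarrow> (\<forall>b. sup (Inf M) b = (INF a\<in>M. sup a b))"

definition strongly_exact_meet :: "'a::complete_lattice set \<Rightarrow> bool" where
  "strongly_exact_meet M \<longleftrightarrow> (\<Inter>a\<in>M. opn a) = opn (Inf M)"

definition Ex :: "'a::complete_lattice set set" where
  "Ex = {F. is_filter F \<and> (\<forall>M. M \<subseteq> F \<and> exact_meet M \<longrightarrow> Inf M \<in> F)}"

definition SE :: "'a::complete_lattice set set" where
  "SE = {F. is_filter F \<and> (\<forall>M. M \<subseteq> F \<and> strongly_exact_meet M \<longrightarrow> Inf M \<in> F)}"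

definition is_sublocale :: "'a::complete_lattice set \<Rightarrow> bool" where
  "is_sublocale S \<longleftrightarrow> (\<forall>X. X \<subseteq> S \<longrightarrow> Inf X \<in> S) \<and> (\<forall>a. \<forall>s\<in>S. fimp a s \<in> S)"

definition sl_join :: "'a::complete_lattice set set \<Rightarrow> 'a set" where
  "sl_join \<S> = \<Inter> {T. is_sublocale T \<and> \<Union> \<S> \<subseteq> T}"

definition fit :: "'a::complete_lattice set \<Rightarrow> 'a set" where
  "fit S = \<Inter> {opn a | a. S \<subseteq> opn a}"

definition S_o :: "'a::complete_lattice set set" where
  "S_o = {\<Inter> (opn ` A) | A. True}"

definition S_c :: "'a::complete_lattice set set" where
  "S_c = {sl_join (cls ` A) | A. True}"

definition S_b :: "'a::complete_lattice set set" where
  "S_b = {sl_join \<X> | \<X>. \<X> \<subseteq> {cls x \<inter> opn y | x y. True}}"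

end

theory Submission
  imports Defs
begin

text \<open>
  All filter coframes involved (Filt, Ex, SE) have top {1} and binary joins given by
  intersection, and in each of them the difference {1} \ G is the annihilator
  {a | \<forall>b\<in>G. b \<squnion> a = 1}, because in a frame annihilators are filters closed under exact
  and strongly exact meets. So each Booleanization is the family of annihilators, which is
  also R(L) and the family of intersections of the closed sets {x | x \<squnion> a = 1}.
  On the sublocale side a fitted sublocale S is determined by the filter {a | S \<subseteq> o(a)},
  and c(x) \<subseteq> o(a) iff a \<squnion> x = 1. The same computation then shows that in a coframe of
  fitted sublocales containing all sets \<Inter>{o(a) | a \<in> annih G} the difference UNIV \ S
  is \<Inter>{o(a) | a \<in> annih {b | S \<subseteq> o(b)}}; these sets are exactly the fits of joins of
  closed sublocales.
\<close>

subsection \<open>Annihilators\<close>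

definition annih :: "'a::bounded_lattice_top set \<Rightarrow> 'a set" where
  "annih H = {a. \<forall>b\<in>H. sup b a = top}"

lemma annih_antimono: "H \<subseteq> H' \<Longrightarrow> annih H' \<subseteq> annih H"
  unfolding annih_def by auto

lemma subset_annih_annih: "H \<subseteq> annih (annih H)"
  unfolding annih_def by (auto simp: sup_commute)

lemma annih_annih_annih [simp]: "annih (annih (annih H)) = annih H"
  by (meson annih_antimono subset_annih_annih subset_antisym)

lemma image_annih_eq_range:
  assumes "\<And>H. annih H \<in> C"
  shows "annih ` C = range annih"
proof
  show "range annih \<subseteq> annih ` C"
    by (metis annih_annih_annih assms image_eqI image_subsetI)
qed auto

lemma subset_annih_iff_disjoint:
  assumes upG: "\<And>a b. a \<in> G \<Longrightarrow> a \<le> b \<Longrightarrow> b \<in> G"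
    and upD: "\<And>a b. a \<in> D \<Longrightarrow> a \<le> b \<Longrightarrow> b \<in> D"
  shows "D \<subseteq> annih G \<longleftrightarrow> G \<inter> D \<subseteq> {top}"
proof
  assume "D \<subseteq> annih G"
  then show "G \<inter> D \<subseteq> {top}"
    unfolding annih_def by force
next
  assume disj: "G \<inter> D \<subseteq> {top}"
  show "D \<subseteq> annih G"
    unfolding annih_def
  proof (intro subsetI CollectI ballI)
    fix a b assume "a \<in> D" "b \<in> G"
    then have "sup b a \<in> G \<inter> D" using upG upD by simp
    then show "sup b a = top" using disj by blast
  qed
qed

lemma R_eq_image_annih: "R = annih ` Filt"
  unfolding R_def filt_diff_def annih_def by auto

lemma Int_fam_Cl_eq_range_annih: "Int_fam (Cl :: 'a::complete_lattice set set) = range annih"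
proof -
  have Cl: "Cl = range (\<lambda>a. annih {a})"
    unfolding Cl_def annih_def by (auto simp: sup_commute)
  have Inter: "(\<lambda>A. \<Inter> ((\<lambda>a. annih {a}) ` A)) = annih"
    unfolding annih_def by auto
  have "Int_fam Cl = (\<lambda>A. \<Inter> ((\<lambda>a. annih {a}) ` A)) ` UNIV"
    unfolding Int_fam_def Cl subset_image_iff by blast
  then show ?thesis
    by (simp only: Inter)
qed

subsection \<open>Coframes of filters\<close>

lemma ctop_eqI:
  assumes "t \<in> C" "\<And>y. y \<in> C \<Longrightarrow> le y t" "antisymp_on C le"
  shows "ctop C le = t"
  unfolding ctop_def
  by (rule the_equality) (use assms in \<open>auto dest: antisymp_onD\<close>)

lemma cjoin_eqI:
  assumes "is_lub C le {a, b} x" "antisymp_on C le"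
  shows "cjoin C le a b = x"
  unfolding cjoin_def
  by (rule the_equality) (use assms in \<open>auto simp: is_lub_def dest: antisymp_onD\<close>)

lemma codiff_eqI:
  assumes "c \<in> C" "\<And>d. d \<in> C \<Longrightarrow> le a (cjoin C le b d) \<longleftrightarrow> le c d"
    and "reflp_on C le" "antisymp_on C le"
  shows "codiff C le a b = c"
  unfolding codiff_def
proof (rule the_equality)
  fix c' assume c': "c' \<in> C \<and> (\<forall>d\<in>C. le a (cjoin C le b d) \<longleftrightarrow> le c' d)"
  then have "le c' d \<longleftrightarrow> le c d" if "d \<in> C" for d
    using assms(2) that by blast
  then show "c' = c"
    using assms c' by (meson antisymp_onD reflp_onD)
qed (use assms in blast)

lemma reflp_on_rev_incl: "reflp_on C rev_incl"
  by (simp add: reflp_on_def rev_incl_def)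

lemma antisymp_on_rev_incl: "antisymp_on C rev_incl"
  by (auto simp: antisymp_on_def rev_incl_def)

lemma filter_top: "is_filter {top :: 'a::complete_lattice}"
  unfolding is_filter_def by (simp add: top_unique)

lemma top_mem_filter: "is_filter F \<Longrightarrow> (top :: 'a::complete_lattice) \<in> F"
  unfolding is_filter_def by (meson ex_in_conv top_greatest)

lemma filter_Int:
  assumes "is_filter F" "is_filter G"
  shows "is_filter (F \<inter> G :: 'a::complete_lattice set)"
proof -
  have "top \<in> F \<inter> G"
    using assms by (simp add: top_mem_filter)
  then show ?thesis
    using assms unfolding is_filter_def by auto
qed

lemma booleanization_filter_family:
  assumes filters: "C \<subseteq> Filt" and top: "{top} \<in> C"
    and Int: "\<And>F G. F \<in> C \<Longrightarrow> G \<in> C \<Longrightarrow> F \<inter> G \<in> C"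
    and annih: "\<And>H. annih H \<in> C"
  shows "booleanization C rev_incl = range annih"
proof -
  have upset: "b \<in> F" if "F \<in> C" "a \<in> F" "a \<le> b" for F a b
    using filters that by (auto simp: Filt_def is_filter_def)
  have ctop: "ctop C rev_incl = {top}"
    by (rule ctop_eqI)
       (use top filters top_mem_filter antisymp_on_rev_incl in \<open>auto simp: rev_incl_def Filt_def\<close>)
  have cjoin: "cjoin C rev_incl F G = F \<inter> G" if "F \<in> C" "G \<in> C" for F G
  proof (rule cjoin_eqI [OF _ antisymp_on_rev_incl])
    show "is_lub C rev_incl {F, G} (F \<inter> G)"
      unfolding is_lub_def rev_incl_def using that Int by blast
  qed
  have "codiff C rev_incl (ctop C rev_incl) G = annih G" if G: "G \<in> C" for G
  proof (rule codiff_eqI [OF annih _ reflp_on_rev_incl antisymp_on_rev_incl])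
    fix D assume D: "D \<in> C"
    have "D \<subseteq> annih G \<longleftrightarrow> G \<inter> D \<subseteq> {top}"
      by (rule subset_annih_iff_disjoint) (use upset G D in blast)+
    then show "rev_incl (ctop C rev_incl) (cjoin C rev_incl G D) \<longleftrightarrow> rev_incl (annih G) D"
      by (simp add: ctop cjoin G D rev_incl_def)
  qed
  then have "booleanization C rev_incl = annih ` C"
    unfolding booleanization_def by auto
  then show ?thesis
    using image_annih_eq_range annih by metis
qed

subsection \<open>Fitting\<close>

definition opn_above :: "'a::complete_lattice set \<Rightarrow> 'a set" where
  "opn_above S = {a. S \<subseteq> opn a}"

lemma fit_eq_Inter_opn_above: "fit S = \<Inter> (opn ` opn_above S)"
  unfolding fit_def opn_above_def by auto

lemma subset_opn_above_iff: "A \<subseteq> opn_above S \<longleftrightarrow> S \<subseteq> \<Inter> (opn ` A)"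
  unfolding opn_above_def by auto

lemma subset_fit: "S \<subseteq> fit S"
  unfolding fit_def by auto

lemma fit_mono: "S \<subseteq> T \<Longrightarrow> fit S \<subseteq> fit T"
  unfolding fit_def by blast

lemma opn_above_antimono: "S \<subseteq> T \<Longrightarrow> opn_above T \<subseteq> opn_above S"
  unfolding opn_above_def by auto

lemma opn_above_fit [simp]: "opn_above (fit S) = opn_above S"
  unfolding opn_above_def fit_def by auto

lemma opn_above_Un: "opn_above (S \<union> T) = opn_above S \<inter> opn_above T"
  unfolding opn_above_def by auto

lemma fit_Inter_opn [simp]: "fit (\<Inter> (opn ` A)) = \<Inter> (opn ` A)"
proof (rule subset_antisym)
  have "A \<subseteq> opn_above (\<Inter> (opn ` A))"
    by (simp add: subset_opn_above_iff)
  then show "fit (\<Inter> (opn ` A)) \<subseteq> \<Inter> (opn ` A)"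
    unfolding fit_eq_Inter_opn_above by blast
qed (rule subset_fit)

lemma fit_fit [simp]: "fit (fit S) = fit S"
  by (simp only: fit_eq_Inter_opn_above[of S] fit_Inter_opn)

lemma fit_UNIV [simp]: "fit UNIV = UNIV"
  using subset_fit [of UNIV] by blast

lemma fit_Un_fit: "fit (fit S \<union> fit T) = fit (S \<union> T)"
  by (simp only: fit_eq_Inter_opn_above[of "fit S \<union> fit T"] fit_eq_Inter_opn_above[of "S \<union> T"]
      opn_above_Un opn_above_fit)

lemma subset_fitted_iff:
  assumes "fit D = D"
  shows "S \<subseteq> D \<longleftrightarrow> opn_above D \<subseteq> opn_above S"
proof
  assume "opn_above D \<subseteq> opn_above S"
  then have "fit S \<subseteq> fit D"
    unfolding fit_eq_Inter_opn_above by blast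
  then show "S \<subseteq> D"
    using subset_fit assms by blast
qed (rule opn_above_antimono)

locale frame =
  assumes inf_Sup_distrib: "\<And>(A :: 'a::complete_lattice set) b. inf (Sup A) b = (SUP a\<in>A. inf a b)"
begin

lemma inf_sup_distrib: "inf (sup x y) z = sup (inf x z) (inf y z)" for x y z :: 'a
  using inf_Sup_distrib[of "{x, y}" z] by simp

lemma sup_inf_distrib: "sup b (inf a c) = inf (sup b a) (sup b c)" for a b c :: 'a
proof -
  have "inf (sup b a) (sup b c) = sup (inf b (sup b c)) (inf a (sup b c))"
    by (rule inf_sup_distrib)
  also have "inf a (sup b c) = sup (inf b a) (inf c a)"
    using inf_sup_distrib[of b c a] by (simp add: inf_commute)
  also have "sup (inf b (sup b c)) (sup (inf b a) (inf c a)) = sup b (inf a c)"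
    by (simp add: inf_commute sup_absorb1 flip: sup_assoc)
  finally show ?thesis by simp
qed

lemma fimp_iff: "c \<le> fimp a b \<longleftrightarrow> inf c a \<le> b" for a b c :: 'a
proof
  assume "c \<le> fimp a b"
  then have "inf c a \<le> inf (Sup {c. inf c a \<le> b}) a"
    unfolding fimp_def by (rule inf_mono) simp
  also have "\<dots> = (SUP s\<in>{c. inf c a \<le> b}. inf s a)"
    by (rule inf_Sup_distrib)
  also have "\<dots> \<le> b"
    by (rule SUP_least) simp
  finally show "inf c a \<le> b" .
qed (simp add: fimp_def Sup_upper)

lemma fimp_fimp: "fimp a (fimp a' b) = fimp (inf a a') b" for a a' b :: 'a
proof -
  have le: "c \<le> fimp a (fimp a' b) \<longleftrightarrow> c \<le> fimp (inf a a') b" for c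
    by (simp add: fimp_iff inf_assoc)
  show ?thesis
    by (rule order.antisym [OF le [THEN iffD1, OF order.refl] le [THEN iffD2, OF order.refl]])
qed

lemma fimp_mono: "b \<le> b' \<Longrightarrow> fimp a b \<le> fimp a b'" for a b b' :: 'a
  unfolding fimp_def by (rule Sup_subset_mono) (auto intro: order.trans)

lemma le_fimp: "b \<le> fimp a b" for a b :: 'a
  by (simp add: fimp_iff le_infI1)

lemma fimp_eq_top_iff: "fimp a b = top \<longleftrightarrow> a \<le> b" for a b :: 'a
  by (simp add: fimp_iff flip: top_unique)

lemma opn_iff: "s \<in> opn a \<longleftrightarrow> fimp a s = s" for a s :: 'a
proof
  assume "s \<in> opn a"
  then obtain b where "s = fimp a b"
    by (auto simp: opn_def)
  then show "fimp a s = s"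
    by (simp add: fimp_fimp)
next
  assume "fimp a s = s"
  then have "s = fimp a s" ..
  then show "s \<in> opn a"
    unfolding opn_def by blast
qed

lemma opn_iff_fimp_le: "s \<in> opn a \<longleftrightarrow> fimp a s \<le> s" for a s :: 'a
  by (simp add: opn_iff order.eq_iff le_fimp)

lemma opn_mono:
  fixes a a' :: 'a
  assumes "a \<le> a'"
  shows "opn a \<subseteq> opn a'"
proof
  fix s assume s: "s \<in> opn a"
  then have "fimp a' s = fimp a' (fimp a s)"
    by (simp add: opn_iff)
  also have "\<dots> = fimp a s"
    using assms by (simp add: fimp_fimp inf_absorb2)
  also have "\<dots> = s"
    using s by (simp add: opn_iff)
  finally show "s \<in> opn a'"
    by (simp add: opn_iff)
qed

lemma opn_eq_UNIV_iff: "opn a = UNIV \<longleftrightarrow> a = (top :: 'a)"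
proof
  assume "opn a = UNIV"
  then have "fimp a a = a"
    using opn_iff by blast
  moreover have "fimp a a = top"
    by (simp add: fimp_eq_top_iff)
  ultimately show "a = top"
    by simp
next
  have "fimp top s \<le> s" for s :: 'a
    using fimp_iff[of "fimp top s" top s] by simp
  then show "a = top \<Longrightarrow> opn a = UNIV"
    by (auto simp: opn_iff_fimp_le)
qed

lemma opn_top [simp]: "opn top = (UNIV :: 'a set)"
  by (simp add: opn_eq_UNIV_iff)

lemma is_sublocale_opn: "is_sublocale (opn (a :: 'a))"
  unfolding is_sublocale_def
proof (intro conjI allI impI ballI)
  fix X assume X: "X \<subseteq> opn a"
  have "fimp a (Inf X) \<le> Inf X"
  proof (rule Inf_greatest)
    fix s assume s: "s \<in> X"
    have "fimp a (Inf X) \<le> fimp a s"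
      using s by (simp add: fimp_mono Inf_lower)
    also have "fimp a s \<le> s"
      using X s by (auto simp: opn_iff_fimp_le)
    finally show "fimp a (Inf X) \<le> s" .
  qed
  then show "Inf X \<in> opn a"
    by (simp add: opn_iff_fimp_le)
next
  fix b s assume "s \<in> opn a"
  moreover have "fimp a (fimp b s) = fimp b (fimp a s)"
    by (simp add: fimp_fimp inf_commute)
  ultimately show "fimp b s \<in> opn a"
    by (simp add: opn_iff)
qed

lemma cls_subset_opn_iff: "cls x \<subseteq> opn a \<longleftrightarrow> sup a x = (top :: 'a)"
proof
  assume "cls x \<subseteq> opn a"
  then have "sup a x \<in> opn a"
    by (auto simp: cls_def)
  then have "fimp a (sup a x) = sup a x"
    by (simp add: opn_iff)
  moreover have "fimp a (sup a x) = top"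
    by (simp add: fimp_eq_top_iff)
  ultimately show "sup a x = top"
    by simp
next
  assume ax: "sup a x = top"
  show "cls x \<subseteq> opn a"
  proof
    fix y assume "y \<in> cls x"
    then have "x \<le> y" by (simp add: cls_def)
    have "fimp a y = inf (fimp a y) (sup a x)"
      using ax by simp
    also have "\<dots> = sup (inf (fimp a y) a) (inf (fimp a y) x)"
      by (metis inf_commute inf_sup_distrib)
    also have "\<dots> \<le> y"
      using fimp_iff[of "fimp a y" a y] \<open>x \<le> y\<close> by (simp add: le_infI2)
    finally show "y \<in> opn a"
      by (simp add: opn_iff_fimp_le)
  qed
qed

lemma opn_above_Union_cls: "opn_above (\<Union> (cls ` A)) = annih (A :: 'a set)"
  unfolding opn_above_def annih_def by (simp add: UN_subset_iff cls_subset_opn_iff sup_commute)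

lemma opn_above_sl_join: "opn_above (sl_join \<X>) = opn_above (\<Union> \<X> :: 'a set)"
  unfolding opn_above_def sl_join_def using is_sublocale_opn by blast

lemma fit_sl_join: "fit (sl_join \<X>) = fit (\<Union> \<X> :: 'a set)"
  by (simp add: fit_eq_Inter_opn_above opn_above_sl_join)

lemma fit_sl_join_cls: "fit (sl_join (cls ` A)) = \<Inter> (opn ` annih (A :: 'a set))"
  unfolding fit_sl_join by (simp add: fit_eq_Inter_opn_above opn_above_Union_cls)

lemma opn_above_Inter_opn_annih: "opn_above (\<Inter> (opn ` annih G)) = annih (G :: 'a set)"
proof -
  have "opn_above (\<Inter> (opn ` annih G)) = opn_above (fit (sl_join (cls ` G)))"
    by (simp only: fit_sl_join_cls)
  also have "\<dots> = annih G"
    by (simp add: opn_above_sl_join opn_above_Union_cls)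
  finally show ?thesis .
qed

lemma UNIV_subset_fit_iff: "UNIV \<subseteq> fit S \<longleftrightarrow> opn_above S \<subseteq> {top :: 'a}"
proof -
  have "UNIV \<subseteq> fit S \<longleftrightarrow> (\<forall>a\<in>opn_above S. opn a = UNIV)"
    unfolding fit_eq_Inter_opn_above by blast
  then show ?thesis
    by (auto simp: opn_eq_UNIV_iff)
qed

subsection \<open>Booleanizations\<close>

lemma annih_filter: "is_filter (annih (H :: 'a set))"
  unfolding is_filter_def
proof (intro conjI ballI allI impI)
  have "top \<in> annih H"
    by (simp add: annih_def)
  then show "annih H \<noteq> {}"
    by blast
next
  fix a b assume a: "a \<in> annih H" and ab: "a \<le> b"
  show "b \<in> annih H"
    unfolding annih_def
  proof (intro CollectI ballI)
    fix c assume "c \<in> H"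
    then have "top \<le> sup c b"
      using a sup_mono [OF order_refl ab, of c] by (simp add: annih_def)
    then show "sup c b = top"
      by (rule top_le)
  qed
next
  fix a b assume "a \<in> annih H" "b \<in> annih H"
  then show "inf a b \<in> annih H"
    by (simp add: annih_def sup_inf_distrib)
qed

lemma annih_mem_Filt: "annih (H :: 'a set) \<in> Filt"
  by (simp add: Filt_def annih_filter)

lemma annih_mem_Ex: "annih (H :: 'a set) \<in> Ex"
  unfolding Ex_def
proof (intro CollectI conjI allI impI annih_filter)
  fix M assume M: "M \<subseteq> annih H \<and> exact_meet M"
  have "sup b (Inf M) = top" if "b \<in> H" for b
  proof -
    have "sup b (Inf M) = (INF a\<in>M. sup a b)"
      using M by (simp add: exact_meet_def sup_commute)
    also have "\<dots> = top"
      using M that by (auto simp: annih_def sup_commute)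
    finally show ?thesis .
  qed
  then show "Inf M \<in> annih H"
    by (simp add: annih_def)
qed

lemma annih_mem_SE: "annih (H :: 'a set) \<in> SE"
  unfolding SE_def
proof (intro CollectI conjI allI impI annih_filter)
  fix M assume M: "M \<subseteq> annih H \<and> strongly_exact_meet M"
  have "cls b \<subseteq> opn (Inf M)" if "b \<in> H" for b
  proof -
    have "\<forall>a\<in>M. cls b \<subseteq> opn a"
      using M that by (auto simp: annih_def cls_subset_opn_iff sup_commute)
    then have "cls b \<subseteq> \<Inter> (opn ` M)"
      by blast
    then show ?thesis
      using M by (simp add: strongly_exact_meet_def)
  qed
  then show "Inf M \<in> annih H"
    by (simp add: annih_def cls_subset_opn_iff sup_commute)
qed

lemma booleanization_Filt: "booleanization (Filt :: 'a set set) rev_incl = range annih"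
  by (rule booleanization_filter_family)
     (simp_all add: Filt_def filter_top filter_Int annih_filter)

lemma booleanization_Ex: "booleanization (Ex :: 'a set set) rev_incl = range annih"
proof (rule booleanization_filter_family)
  show "Ex \<subseteq> (Filt :: 'a set set)"
    by (auto simp: Ex_def Filt_def)
  show "{top} \<in> (Ex :: 'a set set)"
    by (auto simp: Ex_def filter_top)
  show "F \<inter> G \<in> Ex" if "F \<in> Ex" "G \<in> Ex" for F G :: "'a set"
    using that by (auto simp: Ex_def filter_Int)
qed (rule annih_mem_Ex)

lemma booleanization_SE: "booleanization (SE :: 'a set set) rev_incl = range annih"
proof (rule booleanization_filter_family)
  show "SE \<subseteq> (Filt :: 'a set set)"
    by (auto simp: SE_def Filt_def)
  show "{top} \<in> (SE :: 'a set set)"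
    by (auto simp: SE_def filter_top)
  show "F \<inter> G \<in> SE" if "F \<in> SE" "G \<in> SE" for F G :: "'a set"
    using that by (auto simp: SE_def filter_Int)
qed (rule annih_mem_SE)

lemma booleanization_fitted_family:
  assumes fitted: "\<And>X. X \<in> C \<Longrightarrow> fit X = X" and UNIV: "UNIV \<in> C"
    and Un: "\<And>X Y. X \<in> C \<Longrightarrow> Y \<in> C \<Longrightarrow> fit (X \<union> Y) \<in> C"
    and annih: "\<And>G. \<Inter> (opn ` annih G) \<in> C"
  shows "booleanization C (\<subseteq>) = range (\<lambda>G :: 'a set. \<Inter> (opn ` annih G))"
proof -
  let ?neg = "\<lambda>X :: 'a set. \<Inter> (opn ` annih (opn_above X))"
  have ctop: "ctop C (\<subseteq>) = UNIV"
    by (rule ctop_eqI) (use UNIV in auto)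
  have cjoin: "cjoin C (\<subseteq>) X Y = fit (X \<union> Y)" if XY: "X \<in> C" "Y \<in> C" for X Y
  proof (rule cjoin_eqI [OF _ antisymp_on_le])
    have "fit (X \<union> Y) \<subseteq> Z" if "Z \<in> C" "X \<subseteq> Z" "Y \<subseteq> Z" for Z
      using fit_mono [of "X \<union> Y" Z] fitted that by auto
    then show "is_lub C (\<subseteq>) {X, Y} (fit (X \<union> Y))"
      using Un XY subset_fit [of "X \<union> Y"] by (auto simp: is_lub_def)
  qed
  have upset: "b \<in> opn_above X" if "a \<in> opn_above X" "a \<le> b" for X and a b :: 'a
    using that opn_mono [of a b] by (auto simp: opn_above_def)
  have "codiff C (\<subseteq>) (ctop C (\<subseteq>)) X = ?neg X" if X: "X \<in> C" for X
  proof (rule codiff_eqI [OF annih _ reflp_on_le antisymp_on_le])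
    fix D assume D: "D \<in> C"
    have "UNIV \<subseteq> fit (X \<union> D) \<longleftrightarrow> opn_above X \<inter> opn_above D \<subseteq> {top}"
      by (simp add: UNIV_subset_fit_iff opn_above_Un)
    also have "\<dots> \<longleftrightarrow> opn_above D \<subseteq> annih (opn_above X)"
      by (rule subset_annih_iff_disjoint [symmetric]) (use upset in blast)+
    also have "\<dots> \<longleftrightarrow> ?neg X \<subseteq> D"
      by (simp add: subset_fitted_iff fitted D opn_above_Inter_opn_annih)
    finally show "ctop C (\<subseteq>) \<subseteq> cjoin C (\<subseteq>) X D \<longleftrightarrow> ?neg X \<subseteq> D"
      by (simp add: ctop cjoin X D)
  qed
  then have "booleanization C (\<subseteq>) = ?neg ` C"
    unfolding booleanization_def by auto
  also have "\<dots> = range (\<lambda>G. \<Inter> (opn ` annih G))"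
  proof
    show "range (\<lambda>G. \<Inter> (opn ` annih G)) \<subseteq> ?neg ` C"
    proof
      fix Z :: "'a set" assume "Z \<in> range (\<lambda>G. \<Inter> (opn ` annih G))"
      then obtain G where Z: "Z = \<Inter> (opn ` annih G)"
        by blast
      have "Z = ?neg (\<Inter> (opn ` annih (annih G)))"
        by (simp only: Z opn_above_Inter_opn_annih annih_annih_annih)
      then show "Z \<in> ?neg ` C"
        using annih by blast
    qed
  qed auto
  finally show ?thesis .
qed

lemma fit_image_S_c: "fit ` (S_c :: 'a set set) = range (\<lambda>G. \<Inter> (opn ` annih G))"
proof -
  have S_c: "S_c = range (\<lambda>A :: 'a set. sl_join (cls ` A))"
    unfolding S_c_def by auto
  show ?thesis
    by (simp only: S_c image_image fit_sl_join_cls)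
qed

lemma booleanization_S_o: "booleanization (S_o :: 'a set set) (\<subseteq>) = range (\<lambda>G. \<Inter> (opn ` annih G))"
proof -
  have S_o: "S_o = range (\<lambda>A :: 'a set. \<Inter> (opn ` A))"
    unfolding S_o_def by auto
  show ?thesis
  proof (rule booleanization_fitted_family)
    have "\<Inter> (opn ` {}) = (UNIV :: 'a set)"
      by simp
    then show "UNIV \<in> (S_o :: 'a set set)"
      unfolding S_o by blast
    show "fit (X \<union> Y) \<in> S_o" for X Y :: "'a set"
      unfolding S_o fit_eq_Inter_opn_above by (rule rangeI)
    show "\<Inter> (opn ` annih G) \<in> S_o" for G :: "'a set"
      unfolding S_o by (rule rangeI)
  qed (auto simp: S_o)
qed

lemma booleanization_fit_S_b:
  "booleanization (fit ` (S_b :: 'a set set)) (\<subseteq>) = range (\<lambda>G. \<Inter> (opn ` annih G))"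
proof (rule booleanization_fitted_family)
  define gen :: "'a set set" where "gen = {cls x \<inter> opn y | x y. True}"
  have S_b: "S_b = sl_join ` Pow gen"
    unfolding S_b_def gen_def by auto
  have "cls x \<in> gen" for x
  proof -
    have "cls x = cls x \<inter> opn top"
      by simp
    then show ?thesis
      unfolding gen_def by blast
  qed
  then have cls_mem: "sl_join (cls ` A) \<in> S_b" for A :: "'a set"
    unfolding S_b by blast
  have "fit (sl_join (cls ` {bot :: 'a})) = UNIV"
    by (simp add: fit_sl_join cls_def)
  then show "UNIV \<in> fit ` (S_b :: 'a set set)"
    using cls_mem by (rule image_eqI [OF sym])
  show "fit (X \<union> Y) \<in> fit ` S_b" if "X \<in> fit ` S_b" "Y \<in> fit ` S_b" for X Y :: "'a set"
  proof -
    from that(1) obtain \<X> where X: "X = fit (sl_join \<X>)" "\<X> \<in> Pow gen"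
      unfolding S_b image_image by (rule imageE)
    from that(2) obtain \<Y> where Y: "Y = fit (sl_join \<Y>)" "\<Y> \<in> Pow gen"
      unfolding S_b image_image by (rule imageE)
    have "fit (X \<union> Y) = fit (sl_join (\<X> \<union> \<Y>))"
      by (simp add: X Y fit_sl_join fit_Un_fit)
    moreover have "sl_join (\<X> \<union> \<Y>) \<in> S_b"
      unfolding S_b using X Y by blast
    ultimately show ?thesis
      by (rule image_eqI)
  qed
  show "\<Inter> (opn ` annih G) \<in> fit ` S_b" for G :: "'a set"
    using fit_sl_join_cls [of G, symmetric] cls_mem by (rule image_eqI)
qed auto

end

theorem mainTheorem17:
  assumes frame: "\<And>(A :: 'a::complete_lattice set) b. inf (Sup A) b = (SUP a\<in>A. inf a b)"
  shows "(R :: 'a set set) = Int_fam Cl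
       \<and> Int_fam (Cl :: 'a set set) = booleanization Ex rev_incl
       \<and> booleanization (Ex :: 'a set set) rev_incl = booleanization SE rev_incl
       \<and> booleanization (SE :: 'a set set) rev_incl = booleanization Filt rev_incl
       \<and> fit ` (S_c :: 'a set set) = booleanization (fit ` S_b) (\<subseteq>)
       \<and> booleanization (fit ` (S_b :: 'a set set)) (\<subseteq>) = booleanization S_o (\<subseteq>)"
proof -
  have L: "frame TYPE('a)"
    by (rule frame.intro) (rule frame)
  have "(R :: 'a set set) = range annih"
    unfolding R_eq_image_annih by (rule image_annih_eq_range [OF frame.annih_mem_Filt [OF L]])
  then show ?thesis
    by (simp add: Int_fam_Cl_eq_range_annih frame.booleanization_Ex [OF L]
        frame.booleanization_SE [OF L] frame.booleanization_Filt [OF L]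
        frame.fit_image_S_c [OF L] frame.booleanization_fit_S_b [OF L]
        frame.booleanization_S_o [OF L])
qed

end
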